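(* Let $M,K\ge2$, $Q\ge1$. Consider the family $\mathcal{I}$ of inequalities, indexed by $z\in[Q]$ and tuples $(\mathcal{V}^{(1)},\dots,\mathcal{V}^{(K)})$ of non-empty subsets of $[M]$ with $\mathcal{V}^{(k)}\ne[M]$ for at least one $k$, $$P'\big(Y(x_1)\in\mathcal{V}^{(1)},\dots,Y(x_K)\in\mathcal{V}^{(K)}\big)\le \sum_{k=1}^K P\big(X=k,\,Y\in\mathcal{V}^{(k)}\mid Z=z\big),$$ in the unknowns $P'$ (a distribution on $[M]^K$) and $P(\cdot,\cdot\mid Z=z)$ (distributions on $[K]\times[M]$, $z\in[Q]$). Let $\mathcal{S}\subseteq\mathcal{I}$ consist of those inequalities whose tuple satisfies either (1) there exist $k\ne k^*$ with $\mathcal{V}^{(k)}\ne[M]$ and $\mathcal{V}^{(k^* )}\ne[M]$; or (2) there exist $k^*\in[K]$ and $m\in[M]$ such that $\mathcal{V}^{(k^* )}=[M]\setminus\{m\}$ and $\mathcal{V}^{(k)}=[M]$ for all $k\ne k^*$. Then $\mathcal{S}$ is equivalent to $\mathcal{I}$ (they define the same set of $(P',P(\cdot,\cdot\mid Z))$), $\mathcal{S}$ is non-redundant, and $\mathcal{S}$ has $QK(2^M-M-2)$ fewer inequalities than $\mathcal{I}$.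
   Context: Notation $[n]=\{1,\dots,n\}$. For each fixed $z\in[Q]$, the inequalities with index $z$, together with the constraints that $P'$ and $P(\cdot,\cdot\mid Z=z)$ are probability distributions, define a polytope of pairs $(P',P(\cdot,\cdot\mid Z=z))$. Relative to a set of inequalities, an individual inequality is redundant if it is implied by the remaining inequalities of the set (and the probability-simplex constraints); a set is non-redundant if none of its inequalities is redundant. (The family $\mathcal{I}$ characterizes exactly the pairs of joint counterfactual distribution of $(Y(x_1),\dots,Y(x_K))$ and observed distributions $P(X,Y\mid Z)$ compatible with standard instrumental variable models with $Y\in[M]$, $X\in[K]$, $Z\in[Q]$.) *)

theory Defs
  imports Complex_Main "HOL-Library.FuncSet"
begin

text \<open>Conventions: [n] = {1..n}. Response tuples (Y(x_1),...,Y(x_K)) are extensional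
functions {1..K} -> {1..M}. P' assigns a probability to each tuple; Pz k m stands for
P(X=k, Y=m | Z=z); a family of conditionals is P :: nat => nat => nat => real, P z k m.
An inequality is indexed by (z, V) with V an extensional map k |-> V^(k).\<close>

definition tuples :: "nat \<Rightarrow> nat \<Rightarrow> (nat \<Rightarrow> nat) set" where
  "tuples M K = PiE {1..K} (\<lambda>_. {1..M})"

definition is_joint_distr :: "nat \<Rightarrow> nat \<Rightarrow> ((nat \<Rightarrow> nat) \<Rightarrow> real) \<Rightarrow> bool" where
  "is_joint_distr M K P' \<longleftrightarrow>
     (\<forall>y\<in>tuples M K. 0 \<le> P' y) \<and> (\<Sum>y\<in>tuples M K. P' y) = 1"

definition is_obs_distr :: "nat \<Rightarrow> nat \<Rightarrow> (nat \<Rightarrow> nat \<Rightarrow> real) \<Rightarrow> bool" where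
  "is_obs_distr M K Pz \<longleftrightarrow>
     (\<forall>k\<in>{1..K}. \<forall>m\<in>{1..M}. 0 \<le> Pz k m) \<and> (\<Sum>k=1..K. \<Sum>m=1..M. Pz k m) = 1"

definition ineq_holds ::
  "nat \<Rightarrow> nat \<Rightarrow> ((nat \<Rightarrow> nat) \<Rightarrow> real) \<Rightarrow> (nat \<Rightarrow> nat \<Rightarrow> real) \<Rightarrow> (nat \<Rightarrow> nat set) \<Rightarrow> bool" where
  "ineq_holds M K P' Pz V \<longleftrightarrow>
     (\<Sum>y\<in>{y\<in>tuples M K. \<forall>k\<in>{1..K}. y k \<in> V k}. P' y)
       \<le> (\<Sum>k=1..K. \<Sum>m\<in>V k. Pz k m)"

definition I_idx :: "nat \<Rightarrow> nat \<Rightarrow> nat \<Rightarrow> (nat \<times> (nat \<Rightarrow> nat set)) set" where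
  "I_idx M K Q = {(z, V). z \<in> {1..Q} \<and>
      V \<in> PiE {1..K} (\<lambda>_. {A. A \<subseteq> {1..M} \<and> A \<noteq> {}}) \<and>
      (\<exists>k\<in>{1..K}. V k \<noteq> {1..M})}"

definition S_idx :: "nat \<Rightarrow> nat \<Rightarrow> nat \<Rightarrow> (nat \<times> (nat \<Rightarrow> nat set)) set" where
  "S_idx M K Q = {(z, V) \<in> I_idx M K Q.
      (\<exists>k\<in>{1..K}. \<exists>k'\<in>{1..K}. k \<noteq> k' \<and> V k \<noteq> {1..M} \<and> V k' \<noteq> {1..M}) \<or>
      (\<exists>ks\<in>{1..K}. \<exists>m\<in>{1..M}. V ks = {1..M} - {m} \<and>
          (\<forall>k\<in>{1..K}. k \<noteq> ks \<longrightarrow> V k = {1..M}))}"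

definition feasible ::
  "nat \<Rightarrow> nat \<Rightarrow> nat \<Rightarrow> (nat \<times> (nat \<Rightarrow> nat set)) set
     \<Rightarrow> (((nat \<Rightarrow> nat) \<Rightarrow> real) \<times> (nat \<Rightarrow> nat \<Rightarrow> nat \<Rightarrow> real)) set" where
  "feasible M K Q J = {(P', P). is_joint_distr M K P' \<and>
      (\<forall>z\<in>{1..Q}. is_obs_distr M K (P z)) \<and>
      (\<forall>(z, V)\<in>J. ineq_holds M K P' (P z) V)}"

definition non_redundant :: "nat \<Rightarrow> nat \<Rightarrow> (nat \<times> (nat \<Rightarrow> nat set)) set \<Rightarrow> bool" where
  "non_redundant M K J \<longleftrightarrow>
     (\<forall>(z, V)\<in>J. \<exists>P' Pz. is_joint_distr M K P' \<and> is_obs_distr M K Pz \<and>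
        (\<forall>(z', V')\<in>J. z' = z \<and> V' \<noteq> V \<longrightarrow> ineq_holds M K P' Pz V') \<and>
        \<not> ineq_holds M K P' Pz V)"

end

theory Submission
  imports Defs
begin

(*
  Given that P' and P(.,.|z) are probability distributions, an inequality whose tuple has a single
  non-full coordinate k, with V^(k) = B, says exactly that sum_{m not in B} P(X=k, Y=m | z) is at most
  P'(Y(x_k) not in B). It is therefore the sum of the inequalities for the co-singletons [M] - {m},
  m not in B, which belong to S; the inequalities of I - S are those with |[M] - B| >= 2.

  Each inequality (z, V) of S is violated by an explicit pair satisfying all others. P' is uniform
  on the box V^(1) x ... x V^(K), plus a uniform mass on the tuples avoiding V^(k) at every non-full
  coordinate k; P(k, .) is uniform on V^(k), plus, for non-full k, the counts of the k-th coordinates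
  of those avoiding tuples. A tuple V' that misses part of some V^(j) loses a factor 1 - 1/M on the
  box (card_plus_mult_prod_le_sum). A tuple V' strictly containing V gains, in some marginal, an
  avoiding tuple outside its own box; essentiality of V is exactly what guarantees such a tuple.
*)

lemma card_plus_mult_prod_le_sum:
  fixes x :: "'a \<Rightarrow> real" and d :: real
  assumes "finite I" and "2 \<le> card I" and x01: "\<And>i. i \<in> I \<Longrightarrow> 0 \<le> x i \<and> x i \<le> 1"
    and "j \<in> I" and "x j \<le> 1 - d"
  shows "(card I + d) * prod x I \<le> sum x I"
proof -
  define u where "u = prod x (I - {j})"
  have prod_eq: "prod x I = x j * u" and sum_eq: "sum x I = x j + sum x (I - {j})"
    using assms by (simp_all add: u_def prod.remove sum.remove)
  have u01: "0 \<le> u" "u \<le> 1"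
    using x01 by (auto simp: u_def intro: prod_nonneg prod_le_1)
  have "u \<le> x i" if "i \<in> I - {j}" for i
  proof -
    have "u = x i * prod x (I - {j} - {i})"
      using that \<open>finite I\<close> by (simp add: u_def prod.remove)
    also have "\<dots> \<le> x i"
      using that x01 by (auto intro: mult_left_le prod_le_1)
    finally show ?thesis .
  qed
  then have "(card I - 1) * u \<le> sum x (I - {j})"
    using sum_mono[of "I - {j}" "\<lambda>_. u" x] \<open>j \<in> I\<close> \<open>finite I\<close> by simp
  moreover have "d * x j \<le> 1 - x j"
  proof (cases "0 \<le> d")
    case True
    then show ?thesis
      using mult_left_le[of "x j" d] x01[OF \<open>j \<in> I\<close>] \<open>x j \<le> 1 - d\<close> by linarith
  next
    case False
    then show ?thesis
      using mult_nonpos_nonneg[of d "x j"] x01[OF \<open>j \<in> I\<close>] by linarith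
  qed
  then have "u * (d * x j) \<le> u * (1 - x j)"
    using u01 by (simp add: mult_left_mono)
  moreover have "0 \<le> (card I - 2) * u * (1 - x j)" "0 \<le> x j * (1 - u)"
    using u01 x01[OF \<open>j \<in> I\<close>] \<open>2 \<le> card I\<close> by simp_all
  \<comment> \<open>with \<open>n = card I\<close>: \<open>x j + (n - 1) u - (n + d) x j u
      = x j (1 - u) + (n - 2) u (1 - x j) + u (1 - x j) - u d x j\<close>\<close>
  ultimately show ?thesis
    unfolding prod_eq sum_eq using \<open>2 \<le> card I\<close> by (simp add: algebra_simps)
qed

lemma sum_card_fibres:
  assumes "finite A" and "finite B"
  shows "(\<Sum>m\<in>B. card {y \<in> A. f y = m}) = card {y \<in> A. f y \<in> B}"
proof -
  have "card {y \<in> A. f y \<in> B} = card (\<Union>m\<in>B. {y \<in> A. f y = m})"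
    by (rule arg_cong[where f = card]) auto
  also have "\<dots> = (\<Sum>m\<in>B. card {y \<in> A. f y = m})"
    using assms by (intro card_UN_disjoint) auto
  finally show ?thesis ..
qed

section \<open>Tuples with a single non-full coordinate\<close>

definition proper_tuples :: "nat \<Rightarrow> nat \<Rightarrow> (nat \<Rightarrow> nat set) set" where
  "proper_tuples M K = {V \<in> PiE {1..K} (\<lambda>_. {A. A \<subseteq> {1..M} \<and> A \<noteq> {}}).
      \<exists>k\<in>{1..K}. V k \<noteq> {1..M}}"

definition essential :: "nat \<Rightarrow> nat \<Rightarrow> (nat \<Rightarrow> nat set) \<Rightarrow> bool" where
  "essential M K V \<longleftrightarrow>
     (\<exists>k\<in>{1..K}. \<exists>k'\<in>{1..K}. k \<noteq> k' \<and> V k \<noteq> {1..M} \<and> V k' \<noteq> {1..M}) \<or>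
     (\<exists>j\<in>{1..K}. \<exists>m\<in>{1..M}. V j = {1..M} - {m} \<and> (\<forall>k\<in>{1..K}. k \<noteq> j \<longrightarrow> V k = {1..M}))"

definition cylinder :: "nat \<Rightarrow> nat \<Rightarrow> nat \<Rightarrow> nat set \<Rightarrow> nat \<Rightarrow> nat set" where
  "cylinder M K j B = (\<lambda>k\<in>{1..K}. if k = j then B else {1..M})"

definition sets_missing_two :: "nat \<Rightarrow> nat set set" where
  "sets_missing_two M =
     {B. B \<subseteq> {1..M} \<and> B \<noteq> {} \<and> B \<noteq> {1..M} \<and> (\<forall>m\<in>{1..M}. B \<noteq> {1..M} - {m})}"

definition marginal :: "nat \<Rightarrow> nat \<Rightarrow> ((nat \<Rightarrow> nat) \<Rightarrow> real) \<Rightarrow> nat \<Rightarrow> nat \<Rightarrow> real" where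
  "marginal M K P' j m = (\<Sum>y\<in>{y \<in> tuples M K. y j = m}. P' y)"

lemma I_idx_eq: "I_idx M K Q = {1..Q} \<times> proper_tuples M K"
  by (auto simp: I_idx_def proper_tuples_def)

lemma S_idx_eq: "S_idx M K Q = {1..Q} \<times> {V \<in> proper_tuples M K. essential M K V}"
  unfolding S_idx_def I_idx_def proper_tuples_def essential_def by blast

lemma proper_tuples_subset: "V \<in> proper_tuples M K \<Longrightarrow> k \<in> {1..K} \<Longrightarrow> V k \<subseteq> {1..M}"
  by (auto simp: proper_tuples_def PiE_iff)

lemma finite_tuples: "finite (tuples M K)"
  by (simp add: tuples_def finite_PiE)

lemma cell_eq_PiE:
  assumes "\<And>k. k \<in> {1..K} \<Longrightarrow> V k \<subseteq> {1..M}"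
  shows "{y \<in> tuples M K. \<forall>k\<in>{1..K}. y k \<in> V k} = PiE {1..K} V"
  using assms unfolding tuples_def by fastforce

lemma fun_upd_in_tuples:
  assumes "y \<in> tuples M K" and "k \<in> {1..K}" and "m \<in> {1..M}"
  shows "y(k := m) \<in> tuples M K"
proof -
  have "insert k {1..K} = {1..K}"
    using assms(2) by blast
  then show ?thesis
    using PiE_fun_upd[of m "\<lambda>_. {1..M}" k y "{1..K}"] assms by (simp add: tuples_def)
qed

lemma cylinder_apply: "k \<in> {1..K} \<Longrightarrow> cylinder M K j B k = (if k = j then B else {1..M})"
  by (simp add: cylinder_def)

lemma cylinder_in_proper_tuples:
  assumes "j \<in> {1..K}" and "B \<subseteq> {1..M}" and "B \<noteq> {}" and "B \<noteq> {1..M}"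
  shows "cylinder M K j B \<in> proper_tuples M K"
proof -
  have "(if k = j then B else {1..M}) \<in> {A. A \<subseteq> {1..M} \<and> A \<noteq> {}}" for k
    using assms by auto
  then show ?thesis
    using assms unfolding proper_tuples_def cylinder_def by (auto simp: restrict_PiE_iff)
qed

lemma co_singleton_nonempty:
  fixes M m :: nat
  assumes "2 \<le> M"
  shows "{1..M} - {m} \<noteq> {}"
proof -
  have "(if m = 1 then 2 else 1) \<in> {1..M} - {m}"
    using assms by auto
  then show ?thesis
    by blast
qed

lemma essential_cylinder_co_singleton:
  assumes "j \<in> {1..K}" and "m \<in> {1..M}"
  shows "essential M K (cylinder M K j ({1..M} - {m}))"
proof -
  have "cylinder M K j ({1..M} - {m}) j = {1..M} - {m}"
    and "\<forall>k\<in>{1..K}. k \<noteq> j \<longrightarrow> cylinder M K j ({1..M} - {m}) k = {1..M}"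
    using assms by (simp_all add: cylinder_apply)
  then show ?thesis
    using assms unfolding essential_def by blast
qed

lemma non_essential_eq_cylinders:
  "{V \<in> proper_tuples M K. \<not> essential M K V}
     = (\<lambda>(j, B). cylinder M K j B) ` ({1..K} \<times> sets_missing_two M)"
proof (intro equalityI subsetI)
  fix V assume "V \<in> {V \<in> proper_tuples M K. \<not> essential M K V}"
  then have V: "V \<in> PiE {1..K} (\<lambda>_. {A. A \<subseteq> {1..M} \<and> A \<noteq> {}})" "\<not> essential M K V"
    and "\<exists>j\<in>{1..K}. V j \<noteq> {1..M}"
    by (auto simp: proper_tuples_def)
  then obtain j where j: "j \<in> {1..K}" "V j \<noteq> {1..M}"
    by blast
  have others: "V k = {1..M}" if "k \<in> {1..K}" "k \<noteq> j" for k
    using V(2) j that unfolding essential_def by blast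
  have V_eq: "V = cylinder M K j (V j)"
  proof
    fix k
    show "V k = cylinder M K j (V j) k"
      using PiE_arb[OF V(1)] others by (cases "k \<in> {1..K}") (auto simp: cylinder_def)
  qed
  have missing: "V j \<in> sets_missing_two M"
  proof -
    have "\<forall>m\<in>{1..M}. V j \<noteq> {1..M} - {m}"
      using V(2) j others unfolding essential_def by blast
    with V(1) j show ?thesis
      by (auto simp: sets_missing_two_def PiE_iff)
  qed
  show "V \<in> (\<lambda>(j, B). cylinder M K j B) ` ({1..K} \<times> sets_missing_two M)"
    by (rule rev_image_eqI[of "(j, V j)"]) (use j missing in \<open>simp_all add: V_eq[symmetric]\<close>)
next
  fix V assume "V \<in> (\<lambda>(j, B). cylinder M K j B) ` ({1..K} \<times> sets_missing_two M)"
  then obtain j B where "j \<in> {1..K}" and B: "B \<in> sets_missing_two M" and V: "V = cylinder M K j B"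
    by auto
  then have "V \<in> proper_tuples M K"
    unfolding sets_missing_two_def by (blast intro: cylinder_in_proper_tuples)
  moreover have "\<not> essential M K V"
    using B unfolding V essential_def sets_missing_two_def by (auto simp: cylinder_apply)
  ultimately show "V \<in> {V \<in> proper_tuples M K. \<not> essential M K V}"
    by blast
qed

section \<open>Reduction to co-singleton inequalities\<close>

lemma sum_marginal:
  assumes "finite B"
  shows "(\<Sum>m\<in>B. marginal M K P' j m) = (\<Sum>y\<in>{y \<in> tuples M K. y j \<in> B}. P' y)"
proof -
  have "(\<Sum>y\<in>{y \<in> tuples M K. y j \<in> B}. P' y)
      = (\<Sum>m\<in>B. \<Sum>y\<in>{y \<in> {y \<in> tuples M K. y j \<in> B}. y j = m}. P' y)"
    using assms finite_tuples by (intro sum.group[symmetric]) auto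
  also have "\<dots> = (\<Sum>m\<in>B. marginal M K P' j m)"
    unfolding marginal_def by (intro sum.cong) auto
  finally show ?thesis ..
qed

lemma ineq_holds_cylinder_iff:
  assumes P': "is_joint_distr M K P'" and Pz: "is_obs_distr M K Pz"
    and "j \<in> {1..K}" and "B \<subseteq> {1..M}"
  shows "ineq_holds M K P' Pz (cylinder M K j B) \<longleftrightarrow>
    (\<Sum>m\<in>{1..M} - B. Pz j m) \<le> (\<Sum>m\<in>{1..M} - B. marginal M K P' j m)"
proof -
  have sum_B: "sum f B = sum f {1..M} - sum f ({1..M} - B)" for f :: "nat \<Rightarrow> real"
    using \<open>B \<subseteq> {1..M}\<close> by (simp add: sum.subset_diff)
  have cell: "{y \<in> tuples M K. \<forall>k\<in>{1..K}. y k \<in> cylinder M K j B k} = {y \<in> tuples M K. y j \<in> B}"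
    using \<open>j \<in> {1..K}\<close> by (auto simp: cylinder_def tuples_def)
  have "{y \<in> tuples M K. y j \<in> {1..M}} = tuples M K"
    using \<open>j \<in> {1..K}\<close> by (auto simp: tuples_def)
  then have "(\<Sum>m\<in>{1..M}. marginal M K P' j m) = 1"
    using P' by (simp add: sum_marginal is_joint_distr_def)
  moreover have "finite B"
    using \<open>B \<subseteq> {1..M}\<close> finite_subset by blast
  ultimately have lhs: "(\<Sum>y\<in>{y \<in> tuples M K. y j \<in> B}. P' y)
      = 1 - (\<Sum>m\<in>{1..M} - B. marginal M K P' j m)"
    using sum_B[of "marginal M K P' j"] by (simp add: sum_marginal[symmetric])
  have "(\<Sum>k=1..K. \<Sum>m\<in>cylinder M K j B k. Pz k m)
      = (\<Sum>k=1..K. (\<Sum>m=1..M. Pz k m) - of_bool (k = j) * (\<Sum>m\<in>{1..M} - B. Pz j m))"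
    by (intro sum.cong) (auto simp: cylinder_def sum_B)
  also have "\<dots> = 1 - (\<Sum>m\<in>{1..M} - B. Pz j m)"
    using \<open>j \<in> {1..K}\<close> Pz by (simp add: sum_subtractf is_obs_distr_def)
  finally show ?thesis
    unfolding ineq_holds_def cell lhs by linarith
qed

lemma obs_le_marginal:
  assumes "2 \<le> M" and feas: "(P', P) \<in> feasible M K Q (S_idx M K Q)"
    and "z \<in> {1..Q}" and "j \<in> {1..K}" and "m \<in> {1..M}"
  shows "P z j m \<le> marginal M K P' j m"
proof -
  have "cylinder M K j ({1..M} - {m}) \<in> proper_tuples M K"
    using \<open>j \<in> {1..K}\<close> \<open>m \<in> {1..M}\<close> co_singleton_nonempty[OF \<open>2 \<le> M\<close>]
    by (intro cylinder_in_proper_tuples) blast+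
  moreover have "essential M K (cylinder M K j ({1..M} - {m}))"
    using \<open>j \<in> {1..K}\<close> \<open>m \<in> {1..M}\<close> by (rule essential_cylinder_co_singleton)
  ultimately have "(z, cylinder M K j ({1..M} - {m})) \<in> S_idx M K Q"
    using \<open>z \<in> {1..Q}\<close> unfolding S_idx_eq by blast
  then have "ineq_holds M K P' (P z) (cylinder M K j ({1..M} - {m}))"
    using feas unfolding feasible_def by blast
  moreover have "is_joint_distr M K P'" and "is_obs_distr M K (P z)"
    using feas \<open>z \<in> {1..Q}\<close> unfolding feasible_def by blast+
  moreover have "{1..M} - ({1..M} - {m}) = {m}"
    using \<open>m \<in> {1..M}\<close> by auto
  ultimately show ?thesis
    using \<open>j \<in> {1..K}\<close> by (simp add: ineq_holds_cylinder_iff)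
qed

lemma feasible_S_idx_eq_I_idx:
  assumes "2 \<le> M"
  shows "feasible M K Q (S_idx M K Q) = feasible M K Q (I_idx M K Q)"
proof
  show "feasible M K Q (I_idx M K Q) \<subseteq> feasible M K Q (S_idx M K Q)"
    unfolding feasible_def S_idx_def by blast
next
  show "feasible M K Q (S_idx M K Q) \<subseteq> feasible M K Q (I_idx M K Q)"
  proof (clarify)
    fix P' P assume feas: "(P', P) \<in> feasible M K Q (S_idx M K Q)"
    then have P': "is_joint_distr M K P'" and P: "\<And>z. z \<in> {1..Q} \<Longrightarrow> is_obs_distr M K (P z)"
      unfolding feasible_def by blast+
    have "ineq_holds M K P' (P z) V" if zV: "(z, V) \<in> I_idx M K Q" for z V
    proof (cases "(z, V) \<in> S_idx M K Q")
      case True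
      with feas show ?thesis
        unfolding feasible_def by blast
    next
      case False
      with zV have "z \<in> {1..Q}" and "V \<in> {V \<in> proper_tuples M K. \<not> essential M K V}"
        unfolding I_idx_eq S_idx_eq by blast+
      then obtain j B where j: "j \<in> {1..K}" and B: "B \<in> sets_missing_two M"
        and V: "V = cylinder M K j B"
        unfolding non_essential_eq_cylinders by auto
      have "B \<subseteq> {1..M}"
        using B by (simp add: sets_missing_two_def)
      moreover have "(\<Sum>m\<in>{1..M} - B. P z j m) \<le> (\<Sum>m\<in>{1..M} - B. marginal M K P' j m)"
        using obs_le_marginal[OF assms feas \<open>z \<in> {1..Q}\<close> j] by (intro sum_mono) blast
      ultimately show ?thesis
        unfolding V using ineq_holds_cylinder_iff[OF P' P[OF \<open>z \<in> {1..Q}\<close>] j] by blast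
    qed
    with P' P show "(P', P) \<in> feasible M K Q (I_idx M K Q)"
      unfolding feasible_def I_idx_def by blast
  qed
qed

section \<open>Counting the dropped inequalities\<close>

lemma cylinder_eq_iff:
  assumes "j \<in> {1..K}" and "j' \<in> {1..K}" and "B \<noteq> {1..M}"
  shows "cylinder M K j B = cylinder M K j' B' \<longleftrightarrow> j = j' \<and> B = B'"
proof
  assume "cylinder M K j B = cylinder M K j' B'"
  then have "cylinder M K j B j = cylinder M K j' B' j"
    by simp
  then have "B = (if j = j' then B' else {1..M})"
    using assms(1) by (simp add: cylinder_apply)
  with \<open>B \<noteq> {1..M}\<close> show "j = j' \<and> B = B'"
    by (simp split: if_splits)
qed simp

lemma inj_on_cylinder: "inj_on (\<lambda>(j, B). cylinder M K j B) ({1..K} \<times> sets_missing_two M)"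
  by (auto simp: inj_on_def sets_missing_two_def cylinder_eq_iff)

lemma card_sets_missing_two:
  assumes "2 \<le> M"
  shows "card (sets_missing_two M) = 2 ^ M - M - 2"
proof -
  define co_singletons where "co_singletons = (\<lambda>m. {1..M} - {m}) ` {1..M}"
  have "inj_on (\<lambda>m. {1..M} - {m}) {1..M}"
    by (auto simp: inj_on_def)
  then have "card co_singletons = M"
    by (simp add: co_singletons_def card_image)
  moreover have "{1..M} \<notin> co_singletons"
    by (auto simp: co_singletons_def)
  moreover have "{} \<notin> co_singletons"
    using co_singleton_nonempty[OF \<open>2 \<le> M\<close>] by (auto simp: co_singletons_def)
  moreover have "{1..M} \<noteq> {}"
    using \<open>2 \<le> M\<close> by simp
  ultimately have "card (insert {} (insert {1..M} co_singletons)) = M + 2"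
    by (simp add: co_singletons_def)
  moreover have "sets_missing_two M = Pow {1..M} - insert {} (insert {1..M} co_singletons)"
    by (auto simp: sets_missing_two_def co_singletons_def)
  moreover have "insert {} (insert {1..M} co_singletons) \<subseteq> Pow {1..M}"
    by (auto simp: co_singletons_def)
  ultimately show ?thesis
    by (simp add: card_Diff_subset card_Pow finite_subset)
qed

lemma finite_I_idx: "finite (I_idx M K Q)"
proof -
  have "proper_tuples M K \<subseteq> PiE {1..K} (\<lambda>_. {A. A \<subseteq> {1..M} \<and> A \<noteq> {}})"
    unfolding proper_tuples_def by blast
  moreover have "finite (PiE {1..K} (\<lambda>_. {A. A \<subseteq> {1..M} \<and> A \<noteq> {}}))"
    by (intro finite_PiE) auto
  ultimately show ?thesis
    unfolding I_idx_eq by (blast intro: finite_cartesian_product finite_subset)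
qed

lemma card_I_idx:
  assumes "2 \<le> M"
  shows "card (I_idx M K Q) = card (S_idx M K Q) + Q * K * (2 ^ M - M - 2)"
proof -
  have "I_idx M K Q - S_idx M K Q = {1..Q} \<times> {V \<in> proper_tuples M K. \<not> essential M K V}"
    unfolding I_idx_eq S_idx_eq by blast
  moreover have "card {V \<in> proper_tuples M K. \<not> essential M K V} = K * card (sets_missing_two M)"
    unfolding non_essential_eq_cylinders card_image[OF inj_on_cylinder]
    by (simp add: card_cartesian_product)
  ultimately have "card (I_idx M K Q - S_idx M K Q) = Q * (K * card (sets_missing_two M))"
    by (simp add: card_cartesian_product)
  moreover have "S_idx M K Q \<subseteq> I_idx M K Q"
    unfolding S_idx_def by blast
  then have "card (I_idx M K Q - S_idx M K Q) = card (I_idx M K Q) - card (S_idx M K Q)"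
    and "card (S_idx M K Q) \<le> card (I_idx M K Q)"
    using finite_I_idx by (simp_all add: card_Diff_subset finite_subset card_mono)
  ultimately show ?thesis
    using card_sets_missing_two[OF assms] by simp
qed

section \<open>A violating witness for each inequality of S\<close>

lemma ineq_holds_divide:
  assumes "0 < c"
  shows "ineq_holds M K (\<lambda>y. P' y / c) (\<lambda>k m. Pz k m / c) V \<longleftrightarrow> ineq_holds M K P' Pz V"
  using assms unfolding ineq_holds_def by (simp add: sum_divide_distrib[symmetric] divide_le_cancel)

lemma essential_strict_superset:
  assumes "essential M K V" and V: "V \<in> proper_tuples M K" and V': "V' \<in> proper_tuples M K"
    and "V' \<noteq> V" and sub: "\<forall>k\<in>{1..K}. V k \<subseteq> V' k"
  shows "\<exists>a\<in>{1..K}. \<exists>b\<in>{1..K}. a \<noteq> b \<and> \<not> V' a \<subseteq> V a \<and> V' b \<noteq> {1..M}"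
proof -
  note V_sub = proper_tuples_subset[OF V] and V'_sub = proper_tuples_subset[OF V']
  have "\<exists>a\<in>{1..K}. V a \<noteq> V' a"
  proof (rule ccontr)
    assume "\<not> (\<exists>a\<in>{1..K}. V a \<noteq> V' a)"
    then have "V = V'"
      using V V' unfolding proper_tuples_def by (intro PiE_ext) auto
    with \<open>V' \<noteq> V\<close> show False
      by simp
  qed
  then obtain a where a: "a \<in> {1..K}" and a_new: "\<not> V' a \<subseteq> V a"
    using sub by blast
  show ?thesis
  proof (cases "\<exists>b\<in>{1..K}. b \<noteq> a \<and> V' b \<noteq> {1..M}")
    case True
    then obtain b where "b \<in> {1..K}" "b \<noteq> a" "V' b \<noteq> {1..M}"
      by blast
    with a a_new show ?thesis
      by (intro bexI[of _ a] bexI[of _ b]) blast+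
  next
    case False
    then have others_full: "V' k = {1..M}" if "k \<in> {1..K}" "k \<noteq> a" for k
      using that by blast
    with V' a have "V' a \<noteq> {1..M}"
      unfolding proper_tuples_def by blast
    from \<open>essential M K V\<close> consider
      (two) k k' where "k \<in> {1..K}" "k' \<in> {1..K}" "k \<noteq> k'" "V k \<noteq> {1..M}" "V k' \<noteq> {1..M}"
      | (one) j m where "j \<in> {1..K}" "m \<in> {1..M}" "V j = {1..M} - {m}"
          "\<forall>k\<in>{1..K}. k \<noteq> j \<longrightarrow> V k = {1..M}"
      unfolding essential_def by blast
    then show ?thesis
    proof cases
      case two
      then obtain c where c: "c \<in> {1..K}" "c \<noteq> a" "V c \<noteq> {1..M}"
        by metis
      with others_full V_sub have "\<not> V' c \<subseteq> V c"
        by blast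
      with c a \<open>V' a \<noteq> {1..M}\<close> show ?thesis
        by blast
    next
      case one
      have "V a \<noteq> {1..M}"
        using a a_new V'_sub by blast
      with one a have "a = j"
        by blast
      with one a_new V'_sub[OF a] have "m \<in> V' a"
        by blast
      with one \<open>a = j\<close> sub a have "{1..M} \<subseteq> V' a"
        by blast
      with \<open>V' a \<noteq> {1..M}\<close> V'_sub[OF a] show ?thesis
        by blast
    qed
  qed
qed

locale violation_witness =
  fixes M K :: nat and V :: "nat \<Rightarrow> nat set"
  assumes two_le_K: "2 \<le> K" and V_proper: "V \<in> proper_tuples M K"
begin

definition nonfull :: "nat set" where
  "nonfull = {k \<in> {1..K}. V k \<noteq> {1..M}}"

definition avoiding :: "(nat \<Rightarrow> nat) set" where
  "avoiding = PiE {1..K} (\<lambda>k. if k \<in> nonfull then {1..M} - V k else {1..M})"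

definition overlap :: "(nat \<Rightarrow> nat set) \<Rightarrow> nat \<Rightarrow> real" where
  "overlap V' k = card (V' k \<inter> V k) / card (V k)"

(*
  Divided by total_weight these are the witness distributions. With r = card nonfull and
  t = card avoiding both have total weight K M + r t; the deficit 1/t per avoiding tuple makes the
  inequality of V fail by exactly one, its two sides being K M + 1 and K M.
*)
definition joint_weight :: "(nat \<Rightarrow> nat) \<Rightarrow> real" where
  "joint_weight y = (K * M + 1) / card (PiE {1..K} V) * of_bool (y \<in> PiE {1..K} V)
     + (card nonfull - 1 / card avoiding) * of_bool (y \<in> avoiding)"

definition obs_weight :: "nat \<Rightarrow> nat \<Rightarrow> real" where
  "obs_weight k m = M / card (V k) * of_bool (m \<in> V k)
     + of_bool (k \<in> nonfull) * card {y \<in> avoiding. y k = m}"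

definition total_weight :: real where
  "total_weight = K * M + card nonfull * card avoiding"

definition box_mass :: "(nat \<Rightarrow> nat set) \<Rightarrow> real" where
  "box_mass V' = (K * M + 1) * prod (overlap V') {1..K}
     + (card nonfull - 1 / card avoiding) * card (PiE {1..K} V' \<inter> avoiding)"

definition row_mass :: "(nat \<Rightarrow> nat set) \<Rightarrow> real" where
  "row_mass V' = M * sum (overlap V') {1..K} + (\<Sum>k\<in>nonfull. real (card {y \<in> avoiding. y k \<in> V' k}))"

lemma V_subset: "k \<in> {1..K} \<Longrightarrow> V k \<subseteq> {1..M}"
  using V_proper by (rule proper_tuples_subset)

lemma V_nonempty: "k \<in> {1..K} \<Longrightarrow> V k \<noteq> {}"
  using V_proper by (auto simp: proper_tuples_def PiE_iff)

lemma finite_V: "k \<in> {1..K} \<Longrightarrow> finite (V k)"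
  using V_subset finite_subset by blast

lemma card_V_pos: "k \<in> {1..K} \<Longrightarrow> 0 < card (V k)"
  using finite_V V_nonempty by (simp add: card_gt_0_iff)

lemma card_V_le: "k \<in> {1..K} \<Longrightarrow> card (V k) \<le> M"
  using card_mono[OF _ V_subset] by fastforce

lemma nonfull_subset: "nonfull \<subseteq> {1..K}"
  by (auto simp: nonfull_def)

lemma card_nonfull_pos: "0 < card nonfull"
  using V_proper nonfull_subset
  by (auto simp: proper_tuples_def nonfull_def card_gt_0_iff finite_subset)

lemma avoiding_coord:
  assumes "y \<in> avoiding" and "k \<in> nonfull"
  shows "y k \<in> {1..M} - V k"
  using PiE_mem[OF assms(1)[unfolded avoiding_def], of k] assms(2) nonfull_subset by auto

lemma avoiding_subset: "avoiding \<subseteq> tuples M K"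
  unfolding avoiding_def tuples_def by (intro PiE_mono) auto

lemma finite_avoiding: "finite avoiding"
  using avoiding_subset finite_tuples finite_subset by blast

lemma card_avoiding_pos: "0 < card avoiding"
proof -
  have "{1..M} \<noteq> {}"
    using V_subset V_nonempty two_le_K by fastforce
  moreover have "{1..M} - V k \<noteq> {}" if "k \<in> nonfull" for k
    using that V_subset by (auto simp: nonfull_def)
  ultimately have "avoiding \<noteq> {}"
    by (auto simp: avoiding_def PiE_eq_empty_iff)
  then show ?thesis
    using finite_avoiding by (simp add: card_gt_0_iff)
qed

lemma PiE_V_disjoint_avoiding: "PiE {1..K} V \<inter> avoiding = {}"
proof -
  obtain k where "k \<in> nonfull"
    using card_nonfull_pos by (auto simp: card_gt_0_iff)
  then show ?thesis
    using avoiding_coord nonfull_subset by (fastforce simp: PiE_iff)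
qed

lemma sum_joint_weight:
  assumes "\<And>k. k \<in> {1..K} \<Longrightarrow> V' k \<subseteq> {1..M}"
  shows "(\<Sum>y\<in>PiE {1..K} V'. joint_weight y)
    = (K * M + 1) * prod (overlap V') {1..K}
      + (card nonfull - 1 / card avoiding) * card (PiE {1..K} V' \<inter> avoiding)"
proof -
  have "finite (PiE {1..K} V')"
    using assms by (intro finite_PiE) (auto intro: finite_subset)
  then have "(\<Sum>y\<in>PiE {1..K} V'. joint_weight y)
      = (K * M + 1) / card (PiE {1..K} V) * card (PiE {1..K} V' \<inter> PiE {1..K} V)
        + (card nonfull - 1 / card avoiding) * card (PiE {1..K} V' \<inter> avoiding)"
    by (simp add: joint_weight_def sum.distrib flip: sum_distrib_left sum_divide_distrib)
  moreover have "(K * M + 1) / card (PiE {1..K} V) * card (PiE {1..K} V' \<inter> PiE {1..K} V)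
      = (K * M + 1) * prod (overlap V') {1..K}"
    by (simp add: PiE_Int card_PiE overlap_def prod_dividef)
  ultimately show ?thesis
    by (simp only:)
qed

lemma sum_obs_weight:
  assumes "finite B"
  shows "(\<Sum>m\<in>B. obs_weight k m)
    = M * (card (B \<inter> V k) / card (V k)) + of_bool (k \<in> nonfull) * card {y \<in> avoiding. y k \<in> B}"
proof -
  have "(\<Sum>m\<in>B. real (card {y \<in> avoiding. y k = m})) = card {y \<in> avoiding. y k \<in> B}"
    using sum_card_fibres[OF finite_avoiding assms, of "\<lambda>y. y k"] by (simp flip: of_nat_sum)
  then show ?thesis
    using assms by (simp add: obs_weight_def sum.distrib flip: sum_distrib_left sum_divide_distrib)
qed

lemma sum_sum_obs_weight:
  assumes "\<And>k. k \<in> {1..K} \<Longrightarrow> V' k \<subseteq> {1..M}"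
  shows "(\<Sum>k=1..K. \<Sum>m\<in>V' k. obs_weight k m)
    = M * sum (overlap V') {1..K} + (\<Sum>k\<in>nonfull. real (card {y \<in> avoiding. y k \<in> V' k}))"
proof -
  have "(\<Sum>k=1..K. \<Sum>m\<in>V' k. obs_weight k m)
      = (\<Sum>k=1..K. M * overlap V' k + of_bool (k \<in> nonfull) * card {y \<in> avoiding. y k \<in> V' k})"
  proof (intro sum.cong refl)
    fix k assume "k \<in> {1..K}"
    then have "finite (V' k)"
      using assms finite_subset by blast
    then show "(\<Sum>m\<in>V' k. obs_weight k m)
        = M * overlap V' k + of_bool (k \<in> nonfull) * card {y \<in> avoiding. y k \<in> V' k}"
      by (simp add: sum_obs_weight overlap_def)
  qed
  also have "\<dots> = M * sum (overlap V') {1..K} + (\<Sum>k\<in>nonfull. real (card {y \<in> avoiding. y k \<in> V' k}))"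
    using nonfull_subset by (simp add: sum.distrib sum_distrib_left Int_absorb1)
  finally show ?thesis .
qed

lemma overlap_eq_1: "k \<in> {1..K} \<Longrightarrow> V k \<subseteq> V' k \<Longrightarrow> overlap V' k = 1"
  using card_V_pos by (simp add: overlap_def Int_absorb1)

lemma total_weight_pos: "0 < total_weight"
  using card_nonfull_pos card_avoiding_pos by (simp add: total_weight_def add_nonneg_pos)

lemma witness_is_joint_distr: "is_joint_distr M K (\<lambda>y. joint_weight y / total_weight)"
proof -
  have "1 / card avoiding \<le> (1 :: real)" and "1 \<le> real (card nonfull)"
    using card_avoiding_pos card_nonfull_pos by simp_all
  then have "1 / card avoiding \<le> card nonfull"
    by linarith
  then have nonneg: "0 \<le> joint_weight y" for y
    by (simp add: joint_weight_def)
  have "(\<Sum>y\<in>tuples M K. joint_weight y)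
      = K * M + 1 + (card nonfull - 1 / card avoiding) * card avoiding"
    using sum_joint_weight[of "\<lambda>_. {1..M}"] V_subset avoiding_subset
    by (simp add: tuples_def overlap_eq_1 Int_absorb1)
  also have "\<dots> = total_weight"
    using card_avoiding_pos by (simp add: total_weight_def algebra_simps)
  finally show ?thesis
    using nonneg total_weight_pos by (simp add: is_joint_distr_def flip: sum_divide_distrib)
qed

lemma witness_is_obs_distr: "is_obs_distr M K (\<lambda>k m. obs_weight k m / total_weight)"
proof -
  have "{y \<in> avoiding. y k \<in> {1..M}} = avoiding" if "k \<in> nonfull" for k
    using avoiding_coord that by blast
  then have "(\<Sum>k\<in>nonfull. real (card {y \<in> avoiding. y k \<in> {1..M}})) = card nonfull * card avoiding"
    by simp
  moreover have "sum (overlap (\<lambda>_. {1..M})) {1..K} = K"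
    using V_subset by (simp add: overlap_eq_1)
  ultimately have "(\<Sum>k=1..K. \<Sum>m=1..M. obs_weight k m) = M * K + card nonfull * card avoiding"
    using sum_sum_obs_weight[of "\<lambda>_. {1..M}"] by simp
  then show ?thesis
    using total_weight_pos
    by (simp add: is_obs_distr_def obs_weight_def total_weight_def algebra_simps
        flip: sum_divide_distrib)
qed

lemma ineq_holds_weights_iff:
  assumes "V' \<in> proper_tuples M K"
  shows "ineq_holds M K joint_weight obs_weight V' \<longleftrightarrow> box_mass V' \<le> row_mass V'"
proof -
  note V'_sub = proper_tuples_subset[OF assms]
  have "{y \<in> tuples M K. \<forall>k\<in>{1..K}. y k \<in> V' k} = PiE {1..K} V'"
    using V'_sub by (rule cell_eq_PiE)
  then show ?thesis
    unfolding box_mass_def row_mass_def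
    by (simp only: ineq_holds_def sum_joint_weight[of V', OF V'_sub]
        sum_sum_obs_weight[of V', OF V'_sub])
qed

lemma witness_violates: "\<not> ineq_holds M K joint_weight obs_weight V"
proof -
  have "(\<Sum>k\<in>nonfull. real (card {y \<in> avoiding. y k \<in> V k})) = 0"
    using avoiding_coord by (intro sum.neutral) (fastforce simp: card_eq_0_iff)
  then have "row_mass V = K * M"
    by (simp add: row_mass_def overlap_eq_1)
  moreover have "box_mass V = K * M + 1"
    using PiE_V_disjoint_avoiding by (simp add: box_mass_def overlap_eq_1)
  ultimately show ?thesis
    by (simp add: ineq_holds_weights_iff[OF V_proper])
qed

lemma card_PiE_inter_avoiding_le:
  assumes "k \<in> {1..K}"
  shows "card (PiE {1..K} V' \<inter> avoiding) \<le> card {y \<in> avoiding. y k \<in> V' k}"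
  using assms finite_avoiding by (intro card_mono) (auto simp: PiE_iff)

lemma ineq_holds_if_not_superset:
  assumes V': "V' \<in> proper_tuples M K" and "j \<in> {1..K}" and "\<not> V j \<subseteq> V' j"
  shows "ineq_holds M K joint_weight obs_weight V'"
proof -
  have overlap01: "0 \<le> overlap V' k \<and> overlap V' k \<le> 1" if "k \<in> {1..K}" for k
    using that card_V_pos card_mono[OF finite_V[OF that], of "V' k \<inter> V k"]
    by (auto simp: overlap_def divide_le_eq_1)
  have "card (V' j \<inter> V j) < card (V j)"
    using \<open>\<not> V j \<subseteq> V' j\<close> finite_V[OF \<open>j \<in> {1..K}\<close>] by (intro psubset_card_mono) auto
  then have "overlap V' j \<le> (card (V j) - 1) / card (V j)"
    using card_V_pos[OF \<open>j \<in> {1..K}\<close>] by (simp add: overlap_def divide_right_mono)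
  also have "\<dots> \<le> 1 - 1 / M"
    using card_V_pos[OF \<open>j \<in> {1..K}\<close>] card_V_le[OF \<open>j \<in> {1..K}\<close>]
    by (simp add: diff_divide_distrib frac_le)
  finally have "(K + 1 / M) * prod (overlap V') {1..K} \<le> sum (overlap V') {1..K}"
    using card_plus_mult_prod_le_sum[of "{1..K}" "overlap V'" j "1 / M"] two_le_K overlap01
      \<open>j \<in> {1..K}\<close> by simp
  then have "(K * M + 1) * prod (overlap V') {1..K} \<le> M * sum (overlap V') {1..K}"
    using card_V_pos[OF \<open>j \<in> {1..K}\<close>] card_V_le[OF \<open>j \<in> {1..K}\<close>]
    by (simp add: field_simps mult_left_mono)
  moreover have "(card nonfull - 1 / card avoiding) * card (PiE {1..K} V' \<inter> avoiding)
      \<le> real (card nonfull) * card (PiE {1..K} V' \<inter> avoiding)"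
    by (simp add: mult_right_mono)
  moreover have "(\<Sum>k\<in>nonfull. card (PiE {1..K} V' \<inter> avoiding))
      \<le> (\<Sum>k\<in>nonfull. card {y \<in> avoiding. y k \<in> V' k})"
    using card_PiE_inter_avoiding_le nonfull_subset by (intro sum_mono) blast
  then have "real (card nonfull) * card (PiE {1..K} V' \<inter> avoiding)
      \<le> (\<Sum>k\<in>nonfull. real (card {y \<in> avoiding. y k \<in> V' k}))"
    by (simp flip: of_nat_sum of_nat_mult)
  ultimately have "box_mass V' \<le> row_mass V'"
    unfolding box_mass_def row_mass_def by linarith
  with V' show ?thesis
    by (simp add: ineq_holds_weights_iff)
qed

lemma mem_avoiding_iff: "y \<in> avoiding \<longleftrightarrow> y \<in> tuples M K \<and> (\<forall>k\<in>nonfull. y k \<notin> V k)"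
  using nonfull_subset by (auto simp: avoiding_def tuples_def PiE_iff split: if_splits)

lemma card_PiE_inter_avoiding_less:
  assumes "a \<in> {1..K}" and "b \<in> {1..K}" and "a \<noteq> b"
    and "V' a \<subseteq> {1..M}" and "\<not> V' a \<subseteq> V a"
    and "V b \<subseteq> V' b" and "V' b \<noteq> {1..M}" and "V' b \<subseteq> {1..M}"
  shows "card (PiE {1..K} V' \<inter> avoiding) < card {y \<in> avoiding. y a \<in> V' a}"
proof -
  obtain ma where ma: "ma \<in> V' a" "ma \<notin> V a"
    using \<open>\<not> V' a \<subseteq> V a\<close> by blast
  obtain mb where mb: "mb \<in> {1..M}" "mb \<notin> V' b"
    using \<open>V' b \<noteq> {1..M}\<close> \<open>V' b \<subseteq> {1..M}\<close> by blast
  obtain y0 where "y0 \<in> avoiding"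
    using card_avoiding_pos by (auto simp: card_gt_0_iff)
  define y where "y = y0(a := ma, b := mb)"
  have "y \<in> tuples M K"
    using \<open>y0 \<in> avoiding\<close> ma mb assms unfolding y_def
    by (blast intro: fun_upd_in_tuples avoiding_subset[THEN subsetD])
  moreover have "y k \<notin> V k" if "k \<in> nonfull" for k
    using \<open>y0 \<in> avoiding\<close> that ma mb \<open>V b \<subseteq> V' b\<close> \<open>a \<noteq> b\<close>
    by (auto simp: y_def mem_avoiding_iff)
  ultimately have "y \<in> avoiding"
    by (simp add: mem_avoiding_iff)
  moreover have "y a \<in> V' a" and "y \<notin> PiE {1..K} V'"
    using ma mb \<open>a \<noteq> b\<close> PiE_mem[of y "{1..K}" V' b] \<open>b \<in> {1..K}\<close> by (auto simp: y_def)
  ultimately have "PiE {1..K} V' \<inter> avoiding \<subset> {y \<in> avoiding. y a \<in> V' a}"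
    using \<open>a \<in> {1..K}\<close> by (blast dest: PiE_mem)
  then show ?thesis
    using finite_avoiding by (intro psubset_card_mono) auto
qed

lemma ineq_holds_if_strict_superset:
  assumes "essential M K V" and V': "V' \<in> proper_tuples M K" and "V' \<noteq> V"
    and sub: "\<forall>k\<in>{1..K}. V k \<subseteq> V' k"
  shows "ineq_holds M K joint_weight obs_weight V'"
proof -
  note V'_sub = proper_tuples_subset[OF V']
  obtain a b where ab: "a \<in> {1..K}" "b \<in> {1..K}" "a \<noteq> b" "\<not> V' a \<subseteq> V a" "V' b \<noteq> {1..M}"
    using essential_strict_superset[OF assms(1) V_proper V' assms(3) sub] by blast
  then have "card (PiE {1..K} V' \<inter> avoiding) < card {y \<in> avoiding. y a \<in> V' a}"
    using sub V'_sub by (intro card_PiE_inter_avoiding_less) auto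
  moreover have "a \<in> nonfull"
    using ab V'_sub by (auto simp: nonfull_def)
  ultimately have "(\<Sum>k\<in>nonfull. card (PiE {1..K} V' \<inter> avoiding))
      < (\<Sum>k\<in>nonfull. card {y \<in> avoiding. y k \<in> V' k})"
    using card_PiE_inter_avoiding_le nonfull_subset finite_subset[OF nonfull_subset]
    by (intro sum_strict_mono_ex1) blast+
  then have "real (card nonfull) * card (PiE {1..K} V' \<inter> avoiding) + 1
      \<le> (\<Sum>k\<in>nonfull. real (card {y \<in> avoiding. y k \<in> V' k}))"
    by (simp flip: of_nat_sum of_nat_mult of_nat_Suc)
  moreover have "(card nonfull - 1 / card avoiding) * card (PiE {1..K} V' \<inter> avoiding)
      \<le> real (card nonfull) * card (PiE {1..K} V' \<inter> avoiding)"
    by (simp add: mult_right_mono)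
  moreover have "(K * M + 1) * prod (overlap V') {1..K} = M * sum (overlap V') {1..K} + 1"
    using sub by (simp add: overlap_eq_1)
  ultimately have "box_mass V' \<le> row_mass V'"
    unfolding box_mass_def row_mass_def by linarith
  with V' show ?thesis
    by (simp add: ineq_holds_weights_iff)
qed

lemma witness_satisfies_others:
  assumes "essential M K V" and V': "V' \<in> proper_tuples M K" and "V' \<noteq> V"
  shows "ineq_holds M K joint_weight obs_weight V'"
proof (cases "\<forall>k\<in>{1..K}. V k \<subseteq> V' k")
  case True
  with assms show ?thesis
    by (rule ineq_holds_if_strict_superset)
next
  case False
  with V' show ?thesis
    using ineq_holds_if_not_superset by blast
qed

end

lemma non_redundant_S_idx:
  assumes "2 \<le> K"
  shows "non_redundant M K (S_idx M K Q)"
  unfolding non_redundant_def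
proof (clarify)
  fix z V assume "(z, V) \<in> S_idx M K Q"
  then have V: "V \<in> proper_tuples M K" and "essential M K V"
    by (auto simp: S_idx_eq)
  interpret violation_witness M K V
    using assms V by unfold_locales
  let ?P' = "\<lambda>y. joint_weight y / total_weight" and ?Pz = "\<lambda>k m. obs_weight k m / total_weight"
  have "ineq_holds M K ?P' ?Pz V'" if "(z', V') \<in> S_idx M K Q" "V' \<noteq> V" for z' V'
    using that witness_satisfies_others[OF \<open>essential M K V\<close>] total_weight_pos
    by (simp add: S_idx_eq ineq_holds_divide)
  moreover have "\<not> ineq_holds M K ?P' ?Pz V"
    using witness_violates total_weight_pos by (simp add: ineq_holds_divide)
  ultimately show "\<exists>P' Pz. is_joint_distr M K P' \<and> is_obs_distr M K Pz \<and>
      (\<forall>(z', V')\<in>S_idx M K Q. z' = z \<and> V' \<noteq> V \<longrightarrow> ineq_holds M K P' Pz V') \<and>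
      \<not> ineq_holds M K P' Pz V"
    using witness_is_joint_distr witness_is_obs_distr by blast
qed

theorem theorem2:
  fixes M K Q :: nat
  assumes "M \<ge> 2" and "K \<ge> 2" and "Q \<ge> 1"
  shows "feasible M K Q (S_idx M K Q) = feasible M K Q (I_idx M K Q)
         \<and> non_redundant M K (S_idx M K Q)
         \<and> card (I_idx M K Q) = card (S_idx M K Q) + Q * K * (2 ^ M - M - 2)"
  using feasible_S_idx_eq_I_idx[OF assms(1)] non_redundant_S_idx[OF assms(2)]
    card_I_idx[OF assms(1)]
  by blast

end
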